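(* Let $q$ be a self-join-free Boolean conjunctive query, let $q_0\subseteq q$, let $\mathbf{db}$ be a database, and let $\mathbf{o}$ be a garbage set for $q_0$ in $\mathbf{db}$. Then every repair of $\mathbf{db}$ satisfies $q$ if and only if every repair of $\mathbf{db}\setminus\mathbf{o}$ satisfies $q$.
   Context: Every relation name has a signature $[n,k]$ ($1\le k\le n$; primary-key positions $1,\dots,k$) and a mode in $\{\mathsf{c},\mathsf{i}\}$. Facts are variable-free atoms; facts are key-equal if same relation name and same primary-key values. A database is a finite set of facts with no two distinct key-equal facts of mode $\mathsf{c}$, all of whose relation names occur in $q$. The block of a fact $A$ in $\mathbf{db}$ is the set of facts of $\mathbf{db}$ key-equal to $A$. A repair of a set of facts is a maximal subset without two distinct key-equal facts. A self-join-free Boolean conjunctive query is a finite set of atoms with distinct relation names, satisfied by a set of facts $\mathbf{s}$ iff some valuation $\theta$ of its variables has $\theta(q)\subseteq\mathbf{s}$; for a fact $A$, $\mathrm{atom}(A)$ is the atom of $q$ with the same relation name. A subset $\mathbf{o}\subseteq\mathbf{db}$ is a garbage set for $q_0$ in $\mathbf{db}$ if (1) for every $A\in\mathbf{o}$, $\mathrm{atom}(A)\in q_0$ and the block of $A$ in $\mathbf{db}$ is included in $\mathbf{o}$; and (2) there is a repair $\mathbf{r}$ of $\mathbf{o}$ such that for every valuation $\theta$ of the variables of $q$, if $\theta(q)\subseteq(\mathbf{db}\setminus\mathbf{o})\cup\mathbf{r}$ then $\theta(q_0)\cap\mathbf{r}=\emptyset$. *)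

theory Defs
  imports Main
begin

datatype mode = ModeC | ModeI

datatype ('v, 'c) qterm = Var 'v | Const 'c

type_synonym ('r, 'c) fact = "'r \<times> 'c list"
type_synonym ('r, 'v, 'c) atom = "'r \<times> ('v, 'c) qterm list"

(* A schema assigns to every relation name a signature [n,k] (as a pair (n,k))
   and a mode. *)
definition schema_ok :: "('r \<Rightarrow> nat \<times> nat) \<Rightarrow> bool" where
  "schema_ok sig \<longleftrightarrow> (\<forall>R. 1 \<le> snd (sig R) \<and> snd (sig R) \<le> fst (sig R))"

definition key_equal :: "('r \<Rightarrow> nat \<times> nat) \<Rightarrow> ('r, 'c) fact \<Rightarrow> ('r, 'c) fact \<Rightarrow> bool" where
  "key_equal sig A B \<longleftrightarrow> fst A = fst B \<and>
      take (snd (sig (fst A))) (snd A) = take (snd (sig (fst B))) (snd B)"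

definition fact_wf :: "('r \<Rightarrow> nat \<times> nat) \<Rightarrow> ('r, 'c) fact \<Rightarrow> bool" where
  "fact_wf sig A \<longleftrightarrow> length (snd A) = fst (sig (fst A))"

definition atom_wf :: "('r \<Rightarrow> nat \<times> nat) \<Rightarrow> ('r, 'v, 'c) atom \<Rightarrow> bool" where
  "atom_wf sig a \<longleftrightarrow> length (snd a) = fst (sig (fst a))"

definition sjf_bcq :: "('r \<Rightarrow> nat \<times> nat) \<Rightarrow> ('r, 'v, 'c) atom set \<Rightarrow> bool" where
  "sjf_bcq sig q \<longleftrightarrow> finite q \<and> (\<forall>a\<in>q. atom_wf sig a) \<and>
      (\<forall>a\<in>q. \<forall>b\<in>q. fst a = fst b \<longrightarrow> a = b)"

definition is_database :: "('r \<Rightarrow> nat \<times> nat) \<Rightarrow> ('r \<Rightarrow> mode) \<Rightarrow> ('r, 'v, 'c) atom set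
    \<Rightarrow> ('r, 'c) fact set \<Rightarrow> bool" where
  "is_database sig md q db \<longleftrightarrow> finite db \<and> (\<forall>A\<in>db. fact_wf sig A) \<and>
      (\<forall>A\<in>db. \<forall>B\<in>db. key_equal sig A B \<and> A \<noteq> B \<longrightarrow> md (fst A) \<noteq> ModeC) \<and>
      (\<forall>A\<in>db. \<exists>a\<in>q. fst a = fst A)"

definition block :: "('r \<Rightarrow> nat \<times> nat) \<Rightarrow> ('r, 'c) fact set \<Rightarrow> ('r, 'c) fact \<Rightarrow> ('r, 'c) fact set" where
  "block sig db A = {B \<in> db. key_equal sig A B}"

definition consistent :: "('r \<Rightarrow> nat \<times> nat) \<Rightarrow> ('r, 'c) fact set \<Rightarrow> bool" where
  "consistent sig s \<longleftrightarrow> (\<forall>A\<in>s. \<forall>B\<in>s. key_equal sig A B \<longrightarrow> A = B)"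

definition is_repair :: "('r \<Rightarrow> nat \<times> nat) \<Rightarrow> ('r, 'c) fact set \<Rightarrow> ('r, 'c) fact set \<Rightarrow> bool" where
  "is_repair sig s r \<longleftrightarrow> r \<subseteq> s \<and> consistent sig r \<and>
      (\<forall>r'. r \<subseteq> r' \<and> r' \<subseteq> s \<and> consistent sig r' \<longrightarrow> r' = r)"

fun term_val :: "('v \<Rightarrow> 'c) \<Rightarrow> ('v, 'c) qterm \<Rightarrow> 'c" where
  "term_val \<theta> (Var x) = \<theta> x"
| "term_val \<theta> (Const c) = c"

definition atom_val :: "('v \<Rightarrow> 'c) \<Rightarrow> ('r, 'v, 'c) atom \<Rightarrow> ('r, 'c) fact" where
  "atom_val \<theta> a = (fst a, map (term_val \<theta>) (snd a))"

definition query_val :: "('v \<Rightarrow> 'c) \<Rightarrow> ('r, 'v, 'c) atom set \<Rightarrow> ('r, 'c) fact set" where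
  "query_val \<theta> q = atom_val \<theta> ` q"

definition satisfies :: "('r, 'c) fact set \<Rightarrow> ('r, 'v, 'c) atom set \<Rightarrow> bool" where
  "satisfies s q \<longleftrightarrow> (\<exists>\<theta>. query_val \<theta> q \<subseteq> s)"

definition atom_of :: "('r, 'v, 'c) atom set \<Rightarrow> ('r, 'c) fact \<Rightarrow> ('r, 'v, 'c) atom" where
  "atom_of q A = (THE a. a \<in> q \<and> fst a = fst A)"

definition garbage_set :: "('r \<Rightarrow> nat \<times> nat) \<Rightarrow> ('r, 'v, 'c) atom set \<Rightarrow> ('r, 'v, 'c) atom set
    \<Rightarrow> ('r, 'c) fact set \<Rightarrow> ('r, 'c) fact set \<Rightarrow> bool" where
  "garbage_set sig q q0 db gs \<longleftrightarrow> gs \<subseteq> db \<and>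
      (\<forall>A\<in>gs. atom_of q A \<in> q0 \<and> block sig db A \<subseteq> gs) \<and>
      (\<exists>r. is_repair sig gs r \<and>
         (\<forall>\<theta>. query_val \<theta> q \<subseteq> (db - gs) \<union> r \<longrightarrow> query_val \<theta> q0 \<inter> r = {}))"

end

theory Submission
  imports Defs
begin

text \<open>A garbage set \<open>gs\<close> is a union of blocks, so the repairs of \<open>db\<close> are exactly the unions of a
repair of \<open>db - gs\<close> and a repair of \<open>gs\<close>. Restricting a repair of \<open>db\<close> to \<open>db - gs\<close> keeps it
satisfying \<open>q\<close>. Conversely, extend a repair \<open>r1\<close> of \<open>db - gs\<close> by the repair \<open>r0\<close> of \<open>gs\<close> that
witnesses the garbage property. Any match \<open>\<theta>(q)\<close> in \<open>r1 \<union> r0\<close> avoids \<open>r0\<close>: a fact of \<open>\<theta>(q)\<close>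
lying in \<open>gs\<close> is the image of its own atom, which belongs to \<open>q0\<close> since the query is
self-join-free, but \<open>\<theta>(q0)\<close> is disjoint from \<open>r0\<close>. So the match lies in \<open>r1\<close>.\<close>

definition block_closed :: "('r \<Rightarrow> nat \<times> nat) \<Rightarrow> ('r, 'c) fact set \<Rightarrow> ('r, 'c) fact set \<Rightarrow> bool" where
  "block_closed sig db S \<longleftrightarrow> (\<forall>A\<in>S. block sig db A \<subseteq> S)"

lemma key_equal_sym: "key_equal sig A B \<Longrightarrow> key_equal sig B A"
  unfolding key_equal_def by auto

lemma consistent_subset: "consistent sig s \<Longrightarrow> t \<subseteq> s \<Longrightarrow> consistent sig t"
  unfolding consistent_def by blast

lemma consistent_Un_block_closed:
  assumes closed: "block_closed sig db S" and "s1 \<subseteq> S" "s2 \<subseteq> db - S"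
    and "consistent sig s1" "consistent sig s2"
  shows "consistent sig (s1 \<union> s2)"
  unfolding consistent_def
proof (intro ballI impI)
  have separated: False if "A \<in> s1" "B \<in> s2" "key_equal sig A B" for A B
    using that closed \<open>s1 \<subseteq> S\<close> \<open>s2 \<subseteq> db - S\<close> unfolding block_closed_def block_def by blast
  fix A B assume "A \<in> s1 \<union> s2" "B \<in> s1 \<union> s2" "key_equal sig A B"
  then show "A = B"
    using separated key_equal_sym \<open>consistent sig s1\<close> \<open>consistent sig s2\<close>
    unfolding consistent_def by (metis UnE)
qed

lemma is_repair_Diff_block_closed:
  assumes closed: "block_closed sig db S" and r: "is_repair sig db r"
  shows "is_repair sig (db - S) (r - S)"
  unfolding is_repair_def
proof (intro conjI allI impI)
  have r_sub: "r \<subseteq> db" and r_cons: "consistent sig r"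
    using r unfolding is_repair_def by auto
  then show "r - S \<subseteq> db - S" and "consistent sig (r - S)"
    using consistent_subset by blast+
  fix r' assume r': "r - S \<subseteq> r' \<and> r' \<subseteq> db - S \<and> consistent sig r'"
  have "consistent sig ((r \<inter> S) \<union> r')"
    using consistent_Un_block_closed[OF closed, of "r \<inter> S" r'] r' r_cons consistent_subset
    by blast
  moreover have "r \<subseteq> (r \<inter> S) \<union> r'" and "(r \<inter> S) \<union> r' \<subseteq> db"
    using r' r_sub by blast+
  ultimately have "(r \<inter> S) \<union> r' = r"
    using r unfolding is_repair_def by blast
  then show "r' = r - S" using r' by blast
qed

lemma is_repair_Un_block_closed:
  assumes closed: "block_closed sig db S" and "S \<subseteq> db"
    and r1: "is_repair sig (db - S) r1" and r0: "is_repair sig S r0"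
  shows "is_repair sig db (r1 \<union> r0)"
  unfolding is_repair_def
proof (intro conjI allI impI)
  have "r1 \<subseteq> db - S" "consistent sig r1" "r0 \<subseteq> S" "consistent sig r0"
    using r1 r0 unfolding is_repair_def by auto
  then show "r1 \<union> r0 \<subseteq> db" and "consistent sig (r1 \<union> r0)"
    using consistent_Un_block_closed[OF closed, of r0 r1] \<open>S \<subseteq> db\<close> by (auto simp: Un_commute)
  fix r' assume r': "r1 \<union> r0 \<subseteq> r' \<and> r' \<subseteq> db \<and> consistent sig r'"
  then have "consistent sig (r' \<inter> (db - S))" "consistent sig (r' \<inter> S)"
    using consistent_subset by blast+
  moreover have "r1 \<subseteq> r' \<inter> (db - S)" "r0 \<subseteq> r' \<inter> S"
    using r' \<open>r1 \<subseteq> db - S\<close> \<open>r0 \<subseteq> S\<close> by blast+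
  ultimately have "r' \<inter> (db - S) = r1" "r' \<inter> S = r0"
    using r1 r0 unfolding is_repair_def by blast+
  then show "r' = r1 \<union> r0" using r' by blast
qed

lemma satisfies_mono: "satisfies s q \<Longrightarrow> s \<subseteq> t \<Longrightarrow> satisfies t q"
  unfolding satisfies_def by blast

lemma atom_of_atom_val:
  assumes "sjf_bcq sig q" "a \<in> q"
  shows "atom_of q (atom_val \<theta> a) = a"
  using assms unfolding atom_of_def atom_val_def sjf_bcq_def by (intro the_equality) auto

lemma query_val_Int_subset:
  assumes "sjf_bcq sig q" "\<forall>A\<in>S. atom_of q A \<in> q0"
  shows "query_val \<theta> q \<inter> S \<subseteq> query_val \<theta> q0"
  using assms atom_of_atom_val[OF assms(1)] unfolding query_val_def by fastforce

theorem lemma16: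
  fixes sig :: "'r \<Rightarrow> nat \<times> nat" and md :: "'r \<Rightarrow> mode"
    and q q0 :: "('r, 'v, 'c) atom set" and db gs :: "('r, 'c) fact set"
  assumes "schema_ok sig"
    and "sjf_bcq sig q"
    and "q0 \<subseteq> q"
    and "is_database sig md q db"
    and "garbage_set sig q q0 db gs"
  shows "(\<forall>r. is_repair sig db r \<longrightarrow> satisfies r q) \<longleftrightarrow>
         (\<forall>r. is_repair sig (db - gs) r \<longrightarrow> satisfies r q)"
proof -
  obtain r0 where "gs \<subseteq> db" and closed: "block_closed sig db gs"
    and atoms: "\<forall>A\<in>gs. atom_of q A \<in> q0" and r0: "is_repair sig gs r0"
    and avoid: "\<And>\<theta>. query_val \<theta> q \<subseteq> (db - gs) \<union> r0 \<Longrightarrow> query_val \<theta> q0 \<inter> r0 = {}"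
    using assms(5) unfolding garbage_set_def block_closed_def by blast
  have "satisfies r1 q"
    if all_db: "\<forall>r. is_repair sig db r \<longrightarrow> satisfies r q" and r1: "is_repair sig (db - gs) r1" for r1
  proof -
    obtain \<theta> where match: "query_val \<theta> q \<subseteq> r1 \<union> r0"
      using all_db is_repair_Un_block_closed[OF closed \<open>gs \<subseteq> db\<close> r1 r0]
      unfolding satisfies_def by blast
    have "r1 \<subseteq> db - gs" and "r0 \<subseteq> gs" using r1 r0 unfolding is_repair_def by auto
    then have "query_val \<theta> q0 \<inter> r0 = {}" using match avoid by blast
    then have "query_val \<theta> q \<subseteq> r1"
      using match query_val_Int_subset[OF assms(2) atoms, of \<theta>] \<open>r0 \<subseteq> gs\<close> by blast
    then show ?thesis unfolding satisfies_def by blast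
  qed
  moreover have "satisfies r q"
    if "\<forall>r. is_repair sig (db - gs) r \<longrightarrow> satisfies r q" and "is_repair sig db r" for r
    using that is_repair_Diff_block_closed[OF closed] satisfies_mono by blast
  ultimately show ?thesis by blast
qed

end
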